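(* Let $n\ge 2$ and $v\in A_n$. Then $1$ and $2$ lie in the same cycle of $v$ if and only if $\ell_{T(A_n)}(v)$ is odd.
   Context: $A_n$ is the alternating group on $\{1,\dots,n\}$, $T(A_n)=\{(1\,2)(i\,j)\mid 1\le i<j\le n\}$, and $\ell_{T(A_n)}(v)=\min\{k\ge 0\mid v=t_1\cdots t_k,\ t_i\in T(A_n)\}$. Cycles refer to the disjoint cycle decomposition of $v$ (fixed points are cycles of length 1). *)

theory Defs
  imports "HOL-Combinatorics.Combinatorics"
begin

definition alt_group :: "nat \<Rightarrow> (nat \<Rightarrow> nat) set" where
  "alt_group n = {v. v permutes {1..n} \<and> evenperm v}"

definition TA :: "nat \<Rightarrow> (nat \<Rightarrow> nat) set" where
  "TA n = {Transposition.transpose (1::nat) 2 \<circ> Transposition.transpose i j | i j. 1 \<le> i \<and> i < j \<and> j \<le> n}"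

definition lenTA :: "nat \<Rightarrow> (nat \<Rightarrow> nat) \<Rightarrow> nat" where
  "lenTA n v = (LEAST k. \<exists>ts. length ts = k \<and> set ts \<subseteq> TA n \<and> v = foldr (\<circ>) ts id)"

definition same_cycle :: "(nat \<Rightarrow> nat) \<Rightarrow> nat \<Rightarrow> nat \<Rightarrow> bool" where
  "same_cycle v a b \<longleftrightarrow> (\<exists>k. (v ^^ k) a = b)"

end

theory Submission
  imports Defs
begin

text \<open>Write \<open>\<sigma> = (1 2)\<close> and \<open>d(u) = |S| - #cycles(u)\<close>, the least number of
  transpositions whose product is \<open>u\<close>. Composing with a transposition \<open>(a b)\<close> changes
  \<open>d\<close> by exactly one: it drops when \<open>a\<close> and \<open>b\<close> lie in one cycle (which splits) and
  rises otherwise (two cycles merge). Pushing the \<open>\<sigma>\<close>'s of a word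
  \<open>(\<sigma> \<tau>\<^sub>1) \<cdots> (\<sigma> \<tau>\<^sub>k)\<close> to the left by conjugation turns it into \<open>\<sigma>\<^sup>k\<close> times a
  product of \<open>k\<close> transpositions, and conversely; hence \<open>\<ell>(v) = min (d v) (d (\<sigma> v))\<close>
  for \<open>v \<in> A\<^sub>n\<close>. As \<open>d v\<close> is even and \<open>d (\<sigma> v) = d v \<mp> 1\<close>, the minimum is odd
  exactly when 1 and 2 share a cycle of \<open>v\<close>.\<close>

lemma in_orbit_commute:
  assumes "permutation u"
  shows "y \<in> orbit u x \<longleftrightarrow> x \<in> orbit u y"
  using assms by (metis orbit_swap permutation_self_in_orbit)

lemma orbit_eq_of_in_orbit:
  assumes "permutation u" "y \<in> orbit u x"
  shows "orbit u y = orbit u x"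
  using cyclic_on_orbit'[OF assms(1)] assms(2) by (rule orbit_cyclic_eq3)

lemma orbit_subset_of_closed:
  assumes "x \<in> D" "\<And>y. y \<in> D \<Longrightarrow> f y \<in> D"
  shows "orbit f x \<subseteq> D"
proof
  fix y assume "y \<in> orbit f x"
  then show "y \<in> D" by induction (use assms in auto)
qed

lemma same_cycle_iff_in_orbit:
  assumes "permutation u"
  shows "same_cycle u x y \<longleftrightarrow> y \<in> orbit u x"
  using orbit_altdef_permutation[OF assms] unfolding same_cycle_def by auto

lemma orbit_transpose_comp_eq:
  assumes "permutation u" "a \<notin> orbit u x" "b \<notin> orbit u x"
  shows "orbit (Transposition.transpose a b \<circ> u) x = orbit u x"
proof (rule orbit_cong)
  show "x \<in> orbit u x" using assms(1) by (rule permutation_self_in_orbit)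
  fix s assume "s \<in> orbit u x"
  then have "u s \<in> orbit u x" by (rule orbit.step)
  with assms(2,3) have "u s \<noteq> a" "u s \<noteq> b" by auto
  then show "(Transposition.transpose a b \<circ> u) s = u s" by simp
qed

lemma orbit_subset_orbits_transpose_comp:
  fixes u :: "'a \<Rightarrow> 'a" and a b :: 'a
  assumes "permutation u"
  defines "w \<equiv> Transposition.transpose a b \<circ> u"
  shows "orbit u a \<subseteq> orbit w a \<union> orbit w b"
  \<comment> \<open>the right-hand side is invariant under \<open>w\<close> and under \<open>(a b)\<close>, hence under \<open>u\<close>\<close>
proof (rule orbit_subset_of_closed)
  have pw: "permutation w"
    unfolding w_def by (simp add: assms(1) permutation_compose permutation_swap_id)
  then show a: "a \<in> orbit w a \<union> orbit w b" by (simp add: permutation_self_in_orbit)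
  have b: "b \<in> orbit w a \<union> orbit w b" using pw by (simp add: permutation_self_in_orbit)
  fix y assume "y \<in> orbit w a \<union> orbit w b"
  then have "w y \<in> orbit w a \<union> orbit w b" by (auto intro: orbit.step)
  moreover have "u y = Transposition.transpose a b (w y)" by (simp add: w_def)
  ultimately show "u y \<in> orbit w a \<union> orbit w b"
    using a b by (auto simp: transpose_def)
qed

lemma transpose_comp_separates:
  assumes "permutation u" "a \<noteq> b" "b \<in> orbit u a"
  shows "b \<notin> orbit (Transposition.transpose a b \<circ> u) a"
proof -
  define j where "j = funpow_dist u a b"
  \<comment> \<open>the \<open>(a b) \<circ> u\<close>-orbit of \<open>a\<close> is the arc of the \<open>u\<close>-cycle from \<open>a\<close> up to, not including, \<open>b\<close>\<close>
  define D where "D = {(u ^^ i) a | i. i < j}"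
  have uj: "(u ^^ j) a = b" unfolding j_def using assms(3) by (rule funpow_dist_prop)
  with assms(2) have "j > 0" by (cases j) auto
  have not_b: "(u ^^ i) a \<noteq> b" if "i < j" for i
    using that unfolding j_def by (rule funpow_dist_least)
  have not_a: "(u ^^ i) a \<noteq> a" if "0 < i" "i \<le> j" for i
    using funpow_neq_less_funpow_dist[OF assms(3), of i 0] that unfolding j_def by simp
  have "orbit (Transposition.transpose a b \<circ> u) a \<subseteq> D"
  proof (rule orbit_subset_of_closed)
    show "a \<in> D" unfolding D_def using \<open>j > 0\<close> by (auto intro: exI[of _ 0])
    fix y assume "y \<in> D"
    then obtain i where i: "i < j" "y = (u ^^ i) a" unfolding D_def by blast
    then have wy: "(Transposition.transpose a b \<circ> u) y
        = Transposition.transpose a b ((u ^^ Suc i) a)"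
      by simp
    show "(Transposition.transpose a b \<circ> u) y \<in> D"
    proof (cases "Suc i = j")
      case True
      then show ?thesis using wy uj \<open>a \<in> D\<close> by simp
    next
      case False
      then have "(u ^^ Suc i) a \<noteq> a" "(u ^^ Suc i) a \<noteq> b"
        using i(1) not_a[of "Suc i"] not_b[of "Suc i"] by auto
      moreover have "Suc i < j" using i(1) False by simp
      ultimately show ?thesis using wy unfolding D_def by (auto simp del: funpow.simps)
    qed
  qed
  moreover have "b \<notin> D" unfolding D_def using not_b by blast
  ultimately show ?thesis by blast
qed

lemma transpose_comp_joins:
  assumes "permutation u" "b \<notin> orbit u a"
  shows "b \<in> orbit (Transposition.transpose a b \<circ> u) a"
proof -
  let ?w = "Transposition.transpose a b \<circ> u"
  have pw: "permutation ?w" by (simp add: assms(1) permutation_compose permutation_swap_id)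
  have a: "a \<notin> orbit u b" using in_orbit_commute[OF assms(1)] assms(2) by blast
  have b: "b \<in> orbit u b \<inter> orbit ?w b"
    using assms(1) pw by (simp add: permutation_self_in_orbit)
  \<comment> \<open>\<open>?w\<close> follows the \<open>u\<close>-cycle of \<open>b\<close> and sends the \<open>u\<close>-predecessor of \<open>b\<close> to \<open>a\<close>\<close>
  have "orbit u b \<subseteq> orbit u b \<inter> orbit ?w b"
  proof (rule orbit_subset_of_closed[OF b])
    fix y assume y: "y \<in> orbit u b \<inter> orbit ?w b"
    then have uy: "u y \<in> orbit u b" by (blast intro: orbit.step)
    show "u y \<in> orbit u b \<inter> orbit ?w b"
    proof (cases "u y = b")
      case False
      moreover have "u y \<noteq> a" using uy a by blast
      ultimately have "?w y = u y" by simp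
      moreover have "?w y \<in> orbit ?w b" using y by (blast intro: orbit.step)
      ultimately show ?thesis using uy by simp
    qed (use b in simp)
  qed
  moreover have "inv u b \<in> orbit u b"
    using orbit.base[of "inv u" b] orbit_inv_eq[OF assms(1)] by simp
  ultimately have "?w (inv u b) \<in> orbit ?w b" by (blast intro: orbit.step)
  moreover have "u (inv u b) = b"
    using assms(1) by (meson bij_inv_eq_iff permutation_bijective)
  ultimately have "a \<in> orbit ?w b" by simp
  then show ?thesis using in_orbit_commute[OF pw] by blast
qed

definition num_cycles :: "'a set \<Rightarrow> ('a \<Rightarrow> 'a) \<Rightarrow> nat" where
  "num_cycles S u = card (orbit u ` S)"

lemma num_cycles_id: "num_cycles S id = card S"
proof -
  have "orbit id x = {x}" for x :: 'a by (simp add: orbit_eq_singleton_iff)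
  then have "orbit id ` S = (\<lambda>x. {x}) ` S" by simp
  then show ?thesis unfolding num_cycles_def by (simp add: card_image)
qed

lemma num_cycles_le_card: "finite S \<Longrightarrow> num_cycles S u \<le> card S"
  unfolding num_cycles_def by (rule card_image_le)

lemma num_cycles_transpose_comp_split:
  assumes "finite S" "u permutes S" "a \<in> S" "b \<in> S" "a \<noteq> b" "b \<in> orbit u a"
  shows "num_cycles S (Transposition.transpose a b \<circ> u) = Suc (num_cycles S u)"
proof -
  let ?w = "Transposition.transpose a b \<circ> u"
  define C where "C = orbit u a"
  define R where "R = orbit u ` (S - C)"
  have pu: "permutation u" using assms(1,2) permutation_permutes by blast
  have pw: "permutation ?w" by (simp add: pu permutation_compose permutation_swap_id)
  have avoid: "a \<notin> orbit u x" "b \<notin> orbit u x" if "x \<notin> C" for x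
    using that assms(6) orbit_eq_of_in_orbit[OF pu] in_orbit_commute[OF pu]
    unfolding C_def by metis+
  have R_avoid: "a \<notin> X" "b \<notin> X" if "X \<in> R" for X
    using that avoid unfolding R_def by auto
  have "orbit u ` S = insert C R"
  proof -
    have "orbit u x = C" if "x \<in> C" for x
      using orbit_eq_of_in_orbit[OF pu that[unfolded C_def]] unfolding C_def .
    moreover have "a \<in> S \<inter> C" using assms(3) pu by (simp add: C_def permutation_self_in_orbit)
    ultimately show ?thesis unfolding R_def by blast
  qed
  moreover have "orbit ?w ` S = insert (orbit ?w a) (insert (orbit ?w b) R)"
  proof -
    have "orbit ?w x \<in> {orbit ?w a, orbit ?w b}" if "x \<in> C" for x
      using that orbit_subset_orbits_transpose_comp[OF pu, of a b] orbit_eq_of_in_orbit[OF pw]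
      unfolding C_def by blast
    moreover have "orbit ?w x = orbit u x" if "x \<notin> C" for x
      using orbit_transpose_comp_eq[OF pu avoid[OF that]] .
    ultimately show ?thesis using assms(3,4) unfolding R_def by blast
  qed
  moreover have "C \<notin> R" "orbit ?w a \<notin> R" "orbit ?w b \<notin> R"
    using R_avoid permutation_self_in_orbit[OF pu, of a]
      permutation_self_in_orbit[OF pw, of a] permutation_self_in_orbit[OF pw, of b]
    unfolding C_def by blast+
  moreover have "orbit ?w a \<noteq> orbit ?w b"
    using transpose_comp_separates[OF pu assms(5,6)] pw by (metis permutation_self_in_orbit)
  moreover have "finite R" using assms(1) unfolding R_def by simp
  ultimately show ?thesis unfolding num_cycles_def by simp
qed

lemma num_cycles_transpose_comp_join:
  assumes "finite S" "u permutes S" "a \<in> S" "b \<in> S" "b \<notin> orbit u a"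
  shows "num_cycles S u = Suc (num_cycles S (Transposition.transpose a b \<circ> u))"
proof -
  let ?w = "Transposition.transpose a b \<circ> u"
  have pu: "permutation u" using assms(1,2) permutation_permutes by blast
  have "a \<noteq> b" using assms(5) pu permutation_self_in_orbit by metis
  have "?w permutes S" using assms(2-4) by (simp add: permutes_compose permutes_swap_id)
  moreover have "Transposition.transpose a b \<circ> ?w = u" by (simp add: o_assoc)
  ultimately show ?thesis
    using num_cycles_transpose_comp_split[OF assms(1) _ assms(3,4) \<open>a \<noteq> b\<close>]
      transpose_comp_joins[OF pu assms(5)] by metis
qed

definition transposition_length :: "'a set \<Rightarrow> ('a \<Rightarrow> 'a) \<Rightarrow> nat" where
  "transposition_length S u = card S - num_cycles S u"

lemma transposition_length_transpose_comp_split: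
  assumes "finite S" "u permutes S" "a \<in> S" "b \<in> S" "a \<noteq> b" "b \<in> orbit u a"
  shows "Suc (transposition_length S (Transposition.transpose a b \<circ> u)) = transposition_length S u"
  using num_cycles_transpose_comp_split[OF assms] num_cycles_le_card[OF assms(1)]
  unfolding transposition_length_def by (metis Suc_diff_Suc Suc_le_lessD)

lemma transposition_length_transpose_comp_join:
  assumes "finite S" "u permutes S" "a \<in> S" "b \<in> S" "b \<notin> orbit u a"
  shows "transposition_length S (Transposition.transpose a b \<circ> u) = Suc (transposition_length S u)"
  using num_cycles_transpose_comp_join[OF assms] num_cycles_le_card[OF assms(1), of u]
  unfolding transposition_length_def by simp

lemma transposition_length_apply_transps_le:
  assumes "finite S" "\<forall>(a,b)\<in>set ps. a \<in> S \<and> b \<in> S"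
  shows "transposition_length S (apply_transps ps) \<le> length ps"
  using assms(2)
proof (induction ps)
  case Nil
  show ?case unfolding transposition_length_def apply_transps_Nil num_cycles_id by simp
next
  case (Cons p ps)
  obtain a b where p: "p = (a, b)" "a \<in> S" "b \<in> S" using Cons.prems by auto
  let ?u = "apply_transps ps"
  have u: "?u permutes S" using Cons.prems by (intro permutes_apply_transps) auto
  have "transposition_length S (Transposition.transpose a b \<circ> ?u)
      \<le> Suc (transposition_length S ?u)"
  proof (cases "b \<in> orbit ?u a")
    case True
    then show ?thesis
      using transposition_length_transpose_comp_split[OF assms(1) u p(2,3)] by (cases "a = b") auto
  next
    case False
    then show ?thesis
      using transposition_length_transpose_comp_join[OF assms(1) u p(2,3)] by simp
  qed
  moreover have "transposition_length S ?u \<le> length ps" using Cons by auto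
  moreover have "apply_transps (p # ps) = Transposition.transpose a b \<circ> ?u" using p(1) by simp
  ultimately show ?case by (metis Suc_le_mono le_trans length_Cons)
qed

lemma apply_transps_of_transposition_length:
  assumes "finite S" "u permutes S"
  shows "\<exists>ps. (\<forall>(a,b)\<in>set ps. a \<noteq> b \<and> a \<in> S \<and> b \<in> S) \<and>
           length ps = transposition_length S u \<and> apply_transps ps = u"
  using assms(2)
proof (induction "transposition_length S u" arbitrary: u rule: less_induct)
  case less
  show ?case
  proof (cases "u = id")
    case True
    then show ?thesis
      by (intro exI[of _ "[]"]) (simp add: transposition_length_def num_cycles_id)
  next
    case False
    then obtain x where x: "x \<noteq> u x" by (metis eq_id_iff)
    let ?w = "Transposition.transpose x (u x) \<circ> u"
    have S: "x \<in> S" "u x \<in> S"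
      using less.prems x by (metis permutes_not_in, metis permutes_not_in permutes_in_image)
    have w: "?w permutes S" using less.prems S by (simp add: permutes_compose permutes_swap_id)
    have len: "Suc (transposition_length S ?w) = transposition_length S u"
      using transposition_length_transpose_comp_split[OF assms(1) less.prems S x orbit.base] .
    then obtain ps where ps: "\<forall>(a,b)\<in>set ps. a \<noteq> b \<and> a \<in> S \<and> b \<in> S"
        "length ps = transposition_length S ?w" "apply_transps ps = ?w"
      using less.hyps[OF _ w] by auto
    have "apply_transps ((x, u x) # ps) = u" using ps(3) by (simp add: o_assoc)
    then show ?thesis using ps(1,2) len x S by (intro exI[of _ "(x, u x) # ps"]) auto
  qed
qed

lemma evenperm_iff_even_transposition_length:
  assumes "finite S" "u permutes S"
  shows "evenperm u \<longleftrightarrow> even (transposition_length S u)"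
proof -
  obtain ps where "\<forall>(a,b)\<in>set ps. a \<noteq> b" "length ps = transposition_length S u"
      "apply_transps ps = u"
    using apply_transps_of_transposition_length[OF assms] by fast
  then show ?thesis using evenperm_apply_transps_iff by metis
qed

lemma inj_apply_transpose:
  assumes "inj g"
  shows "g (Transposition.transpose i j x) = Transposition.transpose (g i) (g j) (g x)"
  using assms by (auto simp: transpose_def dest: injD)

lemma funpow_transpose:
  "Transposition.transpose a b ^^ k = (if even k then id else Transposition.transpose a b)"
  by (induction k) auto

lemma transpose_comp_transpose_in_TA:
  assumes "i \<noteq> j" "i \<in> {1..n}" "j \<in> {1..n}"
  shows "Transposition.transpose (1::nat) 2 \<circ> Transposition.transpose i j \<in> TA n"
proof (cases "i < j")
  case True
  then show ?thesis using assms unfolding TA_def by auto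
next
  case False
  then have "j < i" using assms(1) by simp
  then show ?thesis using assms transpose_commute[of i j] unfolding TA_def by fastforce
qed

lemma funpow_transpose_1_2_in_range:
  assumes "n \<ge> 2" "i \<in> {1..n}"
  shows "(Transposition.transpose (1::nat) 2 ^^ k) i \<in> {1..n}"
  using assms by (auto simp: funpow_transpose transpose_def)

lemma inj_funpow_transpose: "inj (Transposition.transpose a b ^^ k)"
  by (simp add: funpow_transpose)

lemma TA_word_to_transps:
  assumes "n \<ge> 2" "set ts \<subseteq> TA n"
  shows "\<exists>ps. (\<forall>(a,b)\<in>set ps. a \<in> {1..n} \<and> b \<in> {1..n}) \<and> length ps = length ts \<and>
           apply_transps ps = (Transposition.transpose 1 2 ^^ length ts) \<circ> foldr (\<circ>) ts id"
  using assms(2)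
proof (induction ts)
  case Nil
  show ?case by (intro exI[of _ "[]"]) simp
next
  case (Cons t ts)
  let ?\<sigma> = "Transposition.transpose (1::nat) 2" and ?k = "length ts"
  obtain ps where ps: "\<forall>(a,b)\<in>set ps. a \<in> {1..n} \<and> b \<in> {1..n}" "length ps = ?k"
      "apply_transps ps = (?\<sigma> ^^ ?k) \<circ> foldr (\<circ>) ts id"
    using Cons.IH Cons.prems by (meson set_subset_Cons subset_trans)
  obtain i j where t: "t = ?\<sigma> \<circ> Transposition.transpose i j" "i \<in> {1..n}" "j \<in> {1..n}"
    using Cons.prems unfolding TA_def by auto
  have "(?\<sigma> ^^ Suc ?k) \<circ> ?\<sigma> = ?\<sigma> ^^ ?k"
    by (simp only: funpow_Suc_right comp_assoc transpose_comp_involutory comp_id)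
  then have "(?\<sigma> ^^ Suc ?k) \<circ> foldr (\<circ>) (t # ts) id
      = (?\<sigma> ^^ ?k) \<circ> Transposition.transpose i j \<circ> foldr (\<circ>) ts id"
    using t(1) by (simp add: o_assoc del: funpow.simps)
  also have "\<dots> = Transposition.transpose ((?\<sigma> ^^ ?k) i) ((?\<sigma> ^^ ?k) j) \<circ> apply_transps ps"
    using ps(3) by (simp add: fun_eq_iff inj_apply_transpose[OF inj_funpow_transpose])
  finally have prod: "apply_transps (((?\<sigma> ^^ ?k) i, (?\<sigma> ^^ ?k) j) # ps)
      = (?\<sigma> ^^ length (t # ts)) \<circ> foldr (\<circ>) (t # ts) id"
    by simp
  show ?case
  proof (intro exI conjI)
    show "\<forall>(a,b)\<in>set (((?\<sigma> ^^ ?k) i, (?\<sigma> ^^ ?k) j) # ps). a \<in> {1..n} \<and> b \<in> {1..n}"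
      using ps(1) t(2,3) funpow_transpose_1_2_in_range[OF assms(1)] by simp
    show "length (((?\<sigma> ^^ ?k) i, (?\<sigma> ^^ ?k) j) # ps) = length (t # ts)" using ps(2) by simp
  qed (fact prod)
qed

lemma transps_to_TA_word:
  assumes "n \<ge> 2" "\<forall>(a,b)\<in>set ps. a \<noteq> b \<and> a \<in> {1..n} \<and> b \<in> {1..n}"
  shows "\<exists>ts. set ts \<subseteq> TA n \<and> length ts = length ps \<and>
           foldr (\<circ>) ts id = (Transposition.transpose 1 2 ^^ length ps) \<circ> apply_transps ps"
  using assms(2)
proof (induction ps)
  case Nil
  show ?case by (intro exI[of _ "[]"]) simp
next
  case (Cons p ps)
  let ?\<sigma> = "Transposition.transpose (1::nat) 2" and ?k = "length ps"
  have "\<forall>(a,b)\<in>set ps. a \<noteq> b \<and> a \<in> {1..n} \<and> b \<in> {1..n}" using Cons.prems by simp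
  then obtain ts where ts: "set ts \<subseteq> TA n" "length ts = ?k"
      "foldr (\<circ>) ts id = (?\<sigma> ^^ ?k) \<circ> apply_transps ps"
    using Cons.IH by blast
  obtain i j where p: "p = (i, j)" "i \<noteq> j" "i \<in> {1..n}" "j \<in> {1..n}"
    using Cons.prems by auto
  let ?t = "?\<sigma> \<circ> Transposition.transpose ((?\<sigma> ^^ ?k) i) ((?\<sigma> ^^ ?k) j)"
  have "foldr (\<circ>) (?t # ts) id
      = ?\<sigma> \<circ> (?\<sigma> ^^ ?k) \<circ> Transposition.transpose i j \<circ> apply_transps ps"
    using ts(3) by (simp add: fun_eq_iff inj_apply_transpose[OF inj_funpow_transpose])
  also have "\<dots> = (?\<sigma> ^^ Suc ?k) \<circ> apply_transps (p # ps)"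
    using p(1) by (simp add: o_assoc)
  finally have prod:
      "foldr (\<circ>) (?t # ts) id = (?\<sigma> ^^ length (p # ps)) \<circ> apply_transps (p # ps)"
    by simp
  have "(?\<sigma> ^^ ?k) i \<noteq> (?\<sigma> ^^ ?k) j"
    using p(2) by (simp add: inj_eq[OF inj_funpow_transpose])
  then have "?t \<in> TA n"
    using p(3,4) funpow_transpose_1_2_in_range[OF assms(1)] by (intro transpose_comp_transpose_in_TA)
  show ?case
  proof (intro exI conjI)
    show "set (?t # ts) \<subseteq> TA n" using \<open>?t \<in> TA n\<close> ts(1) by simp
    show "length (?t # ts) = length (p # ps)" using ts(2) by simp
  qed (fact prod)
qed

lemma lenTA_eq_min:
  assumes "n \<ge> 2" "v \<in> alt_group n"
  shows "lenTA n v = min (transposition_length {1..n} v)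
                         (transposition_length {1..n} (Transposition.transpose 1 2 \<circ> v))"
proof -
  let ?S = "{1..n}" and ?\<sigma> = "Transposition.transpose (1::nat) 2"
  let ?d = "transposition_length ?S"
  define word where
    "word k \<longleftrightarrow> (\<exists>ts. length ts = k \<and> set ts \<subseteq> TA n \<and> v = foldr (\<circ>) ts id)" for k
  have len: "lenTA n v = (LEAST k. word k)" unfolding lenTA_def word_def ..
  have v: "v permutes ?S" "evenperm v" using assms(2) unfolding alt_group_def by auto
  have \<sigma>: "?\<sigma> permutes ?S" using assms(1) by (simp add: permutes_swap_id)
  have word_of_permutes: "word (?d u)"
    if u: "u permutes ?S" and uv: "?\<sigma> ^^ ?d u \<circ> u = v" for u
  proof -
    obtain ps where ps: "\<forall>(a,b)\<in>set ps. a \<noteq> b \<and> a \<in> ?S \<and> b \<in> ?S" "length ps = ?d u"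
        "apply_transps ps = u"
      using apply_transps_of_transposition_length[OF _ u] by auto
    obtain ts where "set ts \<subseteq> TA n" "length ts = length ps"
        "foldr (\<circ>) ts id = (?\<sigma> ^^ length ps) \<circ> apply_transps ps"
      using transps_to_TA_word[OF assms(1) ps(1)] by blast
    then show ?thesis using ps(2,3) uv unfolding word_def by auto
  qed
  have "even (?d v)" using evenperm_iff_even_transposition_length[OF _ v(1)] v(2) by simp
  then have word_v: "word (?d v)" using word_of_permutes[OF v(1)] by (simp add: funpow_transpose)
  have "\<not> evenperm (?\<sigma> \<circ> v)"
    using v(2) evenperm_comp[OF permutation_swap_id permutes_imp_permutation[OF _ v(1)]]
    by (simp add: evenperm_swap)
  then have "odd (?d (?\<sigma> \<circ> v))"
    using evenperm_iff_even_transposition_length[OF _ permutes_compose[OF v(1) \<sigma>]] by simp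
  then have word_\<sigma>v: "word (?d (?\<sigma> \<circ> v))"
    using word_of_permutes permutes_compose[OF v(1) \<sigma>]
    by (simp add: funpow_transpose o_assoc)
  have "word (lenTA n v)" unfolding len using word_v by (rule LeastI)
  then obtain ts where ts: "length ts = lenTA n v" "set ts \<subseteq> TA n" "v = foldr (\<circ>) ts id"
    unfolding word_def by blast
  then obtain ps where "\<forall>(a,b)\<in>set ps. a \<in> ?S \<and> b \<in> ?S" "length ps = lenTA n v"
      "apply_transps ps = (?\<sigma> ^^ lenTA n v) \<circ> v"
    using TA_word_to_transps[OF assms(1) ts(2)] by auto
  then have "?d ((?\<sigma> ^^ lenTA n v) \<circ> v) \<le> lenTA n v"
    using transposition_length_apply_transps_le[of ?S ps] by auto
  then have "min (?d v) (?d (?\<sigma> \<circ> v)) \<le> lenTA n v"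
    by (cases "even (lenTA n v)") (auto simp: funpow_transpose)
  moreover have "lenTA n v \<le> ?d v" "lenTA n v \<le> ?d (?\<sigma> \<circ> v)"
    unfolding len using word_v word_\<sigma>v by (auto intro: Least_le)
  ultimately show ?thesis by linarith
qed

theorem corollary6p2:
  fixes n :: nat and v :: "nat \<Rightarrow> nat"
  assumes "n \<ge> 2" and "v \<in> alt_group n"
  shows "same_cycle v 1 2 \<longleftrightarrow> odd (lenTA n v)"
proof -
  let ?S = "{1..n}" and ?\<sigma> = "Transposition.transpose (1::nat) 2"
  let ?d = "transposition_length ?S"
  have v: "v permutes ?S" "evenperm v" using assms(2) unfolding alt_group_def by auto
  have S: "finite ?S" "(1::nat) \<in> ?S" "(2::nat) \<in> ?S" using assms(1) by auto
  have even: "even (?d v)" using evenperm_iff_even_transposition_length[OF S(1) v(1)] v(2) by simp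
  have "same_cycle v 1 2 \<longleftrightarrow> 2 \<in> orbit v 1"
    using same_cycle_iff_in_orbit permutation_permutes v(1) by blast
  moreover have "2 \<in> orbit v 1 \<longleftrightarrow> odd (lenTA n v)"
  proof (cases "2 \<in> orbit v 1")
    case True
    then have "Suc (?d (?\<sigma> \<circ> v)) = ?d v"
      using transposition_length_transpose_comp_split[OF S(1) v(1) S(2,3)] by simp
    moreover from this have "odd (?d (?\<sigma> \<circ> v))" using even by (metis even_Suc)
    ultimately show ?thesis using True lenTA_eq_min[OF assms] by simp
  next
    case False
    then have "?d (?\<sigma> \<circ> v) = Suc (?d v)"
      using transposition_length_transpose_comp_join[OF S(1) v(1) S(2,3)] by simp
    then show ?thesis using False even lenTA_eq_min[OF assms] by simp
  qed
  ultimately show ?thesis by blast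
qed

end
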